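(* Let $A=\langle a,b\mid\ \rangle$ and $B=\langle c,d\mid\ \rangle$ be free groups of rank two, let $C\le A$ be the subgroup generated by $\{a,\ a^{b^2}(a^b)^{-1}a\}$ and $D\le B$ the subgroup generated by $\{c^{-1},\ c^{d^2}(c^d)^{-1}c\}$. Then $C$ is relatively torsion-free in $A$ and $D$ is relatively torsion-free in $B$.
   Context: Notation $x^y=y^{-1}xy$. A subgroup $H\le K$ is relatively torsion-free if $gh_1gh_2\cdots gh_k\ne1$ for all $g\in K\setminus H$, $k\ge1$, $h_i\in H$. *)

theory Defs
  imports "HOL-Algebra.Algebra"
begin

text \<open>Free group on a set S of generators, realised as reduced words.
A letter is a pair (x, e) with x a generator and e = True meaning x inverse.\<close>

type_synonym 'a letter = "'a \<times> bool"

definition inv_letter :: "'a letter \<Rightarrow> 'a letter" where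
  "inv_letter l = (fst l, \<not> snd l)"

fun cancel_cons :: "'a letter \<Rightarrow> 'a letter list \<Rightarrow> 'a letter list" where
  "cancel_cons x [] = [x]"
| "cancel_cons x (y # ys) = (if y = inv_letter x then ys else x # y # ys)"

definition free_red :: "'a letter list \<Rightarrow> 'a letter list" where
  "free_red xs = foldr cancel_cons xs []"

definition reduced_word :: "'a letter list \<Rightarrow> bool" where
  "reduced_word w \<longleftrightarrow> (\<forall>i. Suc i < length w \<longrightarrow> w ! Suc i \<noteq> inv_letter (w ! i))"

definition free_grp :: "'a set \<Rightarrow> ('a letter list) monoid" where
  "free_grp S = \<lparr>carrier = {w. reduced_word w \<and> fst ` set w \<subseteq> S},
                 monoid.mult = (\<lambda>x y. free_red (x @ y)), one = []\<rparr>"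

definition gen_word :: "'a \<Rightarrow> 'a letter list" where
  "gen_word x = [(x, False)]"

definition conjg :: "('g, 'b) monoid_scheme \<Rightarrow> 'g \<Rightarrow> 'g \<Rightarrow> 'g" where
  "conjg G x y = inv\<^bsub>G\<^esub> y \<otimes>\<^bsub>G\<^esub> x \<otimes>\<^bsub>G\<^esub> y"

definition rel_torsion_free :: "('g, 'b) monoid_scheme \<Rightarrow> 'g set \<Rightarrow> bool" where
  "rel_torsion_free K H \<longleftrightarrow>
     (\<forall>g \<in> carrier K - H. \<forall>hs. hs \<noteq> [] \<and> set hs \<subseteq> H \<longrightarrow>
        foldr (\<lambda>h acc. g \<otimes>\<^bsub>K\<^esub> h \<otimes>\<^bsub>K\<^esub> acc) hs \<one>\<^bsub>K\<^esub> \<noteq> \<one>\<^bsub>K\<^esub>)"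

end

(* If the b-exponent sum of g is nonzero, then so is that of g h_1 ... g h_k, because it
   vanishes on C. Otherwise g lies in the kernel N of the exponent sum, which is free on
   a_i = b^-i a b^i (Reidemeister-Schreier). In this basis C = <a_0, a_2 a_1^-1 a_0>, and
   replacing the basis element a_2 by a_2 a_1^-1 exhibits C as a free factor of N.
   A free factor of a free group is relatively torsion-free: write g outside it as
   x u v u^-1 y, where x and y lie in the factor, u v u^-1 is reduced and begins and ends
   with letters outside the factor, and v is cyclically reduced; then every product
   g h_1 ... g h_k freely reduces to a word beginning with x u v.
   D is C with c in place of a, since c and c^-1 generate the same subgroup. *)

theory Submission
  imports Defs
begin

section \<open>Free reduction\<close>

lemma inv_letter_inv[simp]: "inv_letter (inv_letter l) = l"
  by (simp add: inv_letter_def)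

lemma inv_letter_neq[simp]: "inv_letter l \<noteq> l" "l \<noteq> inv_letter l"
  by (auto simp: inv_letter_def prod_eq_iff)

lemma fst_inv_letter[simp]: "fst (inv_letter l) = fst l"
  by (simp add: inv_letter_def)

lemma reduced_word_Nil[simp]: "reduced_word []"
  by (simp add: reduced_word_def)

lemma reduced_word_single[simp]: "reduced_word [x]"
  by (simp add: reduced_word_def)

lemma reduced_word_Cons_Cons[simp]:
  "reduced_word (x # y # w) \<longleftrightarrow> y \<noteq> inv_letter x \<and> reduced_word (y # w)"
  unfolding reduced_word_def by (simp add: All_less_Suc2)

lemma reduced_word_ConsD: "reduced_word (x # w) \<Longrightarrow> reduced_word w"
  by (cases w) auto

lemma reduced_word_append:
  "reduced_word (xs @ ys) \<longleftrightarrow> reduced_word xs \<and> reduced_word ys \<and>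
     (xs \<noteq> [] \<and> ys \<noteq> [] \<longrightarrow> hd ys \<noteq> inv_letter (last xs))"
proof (induction xs)
  case Nil then show ?case by simp
next
  case (Cons x xs)
  show ?case
  proof (cases xs)
    case Nil
    then show ?thesis by (cases ys) auto
  next
    case (Cons x' xs')
    then show ?thesis using Cons.IH by auto
  qed
qed

lemma reduced_word_appendD1: "reduced_word (xs @ ys) \<Longrightarrow> reduced_word xs"
  by (simp add: reduced_word_append)

lemma reduced_word_appendD2: "reduced_word (xs @ ys) \<Longrightarrow> reduced_word ys"
  by (simp add: reduced_word_append)

lemma reduced_word_appendI: "reduced_word xs \<Longrightarrow> reduced_word ys \<Longrightarrow>
   (xs \<noteq> [] \<Longrightarrow> ys \<noteq> [] \<Longrightarrow> hd ys \<noteq> inv_letter (last xs)) \<Longrightarrow> reduced_word (xs @ ys)"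
  by (simp add: reduced_word_append)

lemma cancel_cons_reduced: "reduced_word z \<Longrightarrow> reduced_word (cancel_cons l z)"
  by (cases z) (auto dest: reduced_word_ConsD)

abbreviation red_onto :: "'a letter list \<Rightarrow> 'a letter list \<Rightarrow> 'a letter list" where
  "red_onto xs z \<equiv> foldr cancel_cons xs z"

lemma red_onto_reduced: "reduced_word z \<Longrightarrow> reduced_word (red_onto xs z)"
  by (induction xs) (auto intro: cancel_cons_reduced)

lemma cancel_cons_inv_letter: "reduced_word z \<Longrightarrow> cancel_cons (inv_letter l) (cancel_cons l z) = z"
proof (cases z)
  case Nil then show ?thesis by simp
next
  case (Cons y ys)
  assume r: "reduced_word z"
  show ?thesis
  proof (cases "y = inv_letter l")
    case True
    then show ?thesis using r Cons by (cases ys) auto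
  next
    case False
    then show ?thesis using Cons by simp
  qed
qed

lemma free_red_reduced[simp]: "reduced_word (free_red w)"
  unfolding free_red_def by (rule red_onto_reduced) simp

lemma red_onto_Nil_reduced: "reduced_word w \<Longrightarrow> red_onto w [] = w"
proof (induction w)
  case Nil then show ?case by simp
next
  case (Cons x w)
  then have "red_onto w [] = w" by (auto dest: reduced_word_ConsD)
  then show ?case using Cons.prems by (cases w) auto
qed

lemma free_red_id[simp]: "reduced_word w \<Longrightarrow> free_red w = w"
  unfolding free_red_def by (rule red_onto_Nil_reduced)

lemma free_red_append_red_onto: "free_red (x @ y) = red_onto x (free_red y)"
  unfolding free_red_def by simp

lemma red_onto_free_red: "reduced_word z \<Longrightarrow> red_onto x z = red_onto (free_red x) z"
proof (induction x)
  case Nil then show ?case by (simp add: free_red_def)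
next
  case (Cons l x)
  let ?r = "free_red x"
  have IH: "red_onto x z = red_onto ?r z" using Cons by simp
  have fr: "free_red (l # x) = cancel_cons l ?r" by (simp add: free_red_def)
  have red: "reduced_word ?r" by simp
  show ?case
  proof (cases "?r")
    case Nil then show ?thesis using IH fr by simp
  next
    case (Cons y ys)
    show ?thesis
    proof (cases "y = inv_letter l")
      case True
      have "red_onto (l # x) z = cancel_cons l (red_onto ?r z)" using IH by simp
      also have "\<dots> = cancel_cons l (cancel_cons (inv_letter l) (red_onto ys z))" using Cons True by simp
      also have "\<dots> = red_onto ys z"
        using cancel_cons_inv_letter[of "red_onto ys z" "inv_letter l"] red_onto_reduced[OF Cons.prems] by simp
      finally show ?thesis using fr Cons True by simp
    next
      case False
      then show ?thesis using IH fr Cons by simp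
    qed
  qed
qed

lemma free_red_append_left: "free_red (x @ y) = free_red (free_red x @ y)"
  by (simp add: free_red_append_red_onto red_onto_free_red[of "free_red y" x])

lemma free_red_append_right: "free_red (x @ y) = free_red (x @ free_red y)"
  by (simp add: free_red_append_red_onto)

lemma free_red_append: "free_red (x @ y) = free_red (free_red x @ free_red y)"
  by (metis free_red_append_left free_red_append_right)

lemma free_red_mid: "free_red (x @ m @ y) = free_red (x @ free_red m @ y)"
  by (metis append_assoc free_red_append_left free_red_append_right)

lemma cancel_cons_set: "set (cancel_cons l z) \<subseteq> insert l (set z)"
  by (cases z) auto

lemma red_onto_set: "set (red_onto w z) \<subseteq> set w \<union> set z"
proof (induction w)
  case Nil then show ?case by simp
next
  case (Cons a w) then show ?case using cancel_cons_set[of a "red_onto w z"] by auto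
qed

lemma free_red_set: "set (free_red w) \<subseteq> set w"
  using red_onto_set[of w "[]"] unfolding free_red_def by simp

definition word_inv :: "'a letter list \<Rightarrow> 'a letter list" where
  "word_inv w = rev (map inv_letter w)"

lemma word_inv_simps[simp]: "word_inv [] = []" "word_inv (l # w) = word_inv w @ [inv_letter l]"
  "word_inv (x @ y) = word_inv y @ word_inv x" "word_inv (word_inv w) = w"
  by (auto simp: word_inv_def rev_map[symmetric] comp_def)

lemma set_word_inv: "set (word_inv w) = inv_letter ` set w"
  by (simp add: word_inv_def)

lemma reduced_word_inv: "reduced_word w \<Longrightarrow> reduced_word (word_inv w)"
proof (induction w rule: induct_list012)
  case (3 x y zs)
  then have "reduced_word (word_inv (y # zs))" by simp
  then show ?case using 3 by (auto simp: reduced_word_append)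
qed auto

lemma red_onto_word_inv_right: "reduced_word z \<Longrightarrow> red_onto (x @ word_inv x) z = z"
proof (induction x arbitrary: z)
  case Nil then show ?case by simp
next
  case (Cons l x)
  have "red_onto ((l # x) @ word_inv (l # x)) z = cancel_cons l (red_onto (x @ word_inv x) (cancel_cons (inv_letter l) z))"
    by simp
  also have "\<dots> = cancel_cons l (cancel_cons (inv_letter l) z)"
    using Cons by (simp add: cancel_cons_reduced)
  also have "\<dots> = z" using cancel_cons_inv_letter[OF Cons.prems, of "inv_letter l"] by simp
  finally show ?case .
qed

lemma free_red_word_inv_right[simp]: "free_red (x @ word_inv x) = []"
  unfolding free_red_def using red_onto_word_inv_right[of "[]" x] by simp

lemma free_red_word_inv_left[simp]: "free_red (word_inv x @ x) = []"
  using free_red_word_inv_right[of "word_inv x"] by simp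

lemma free_red_cancel_mid: "free_red (x @ m @ word_inv m @ y) = free_red (x @ y)"
proof -
  have "free_red (x @ m @ word_inv m @ y) = free_red (x @ free_red (m @ word_inv m) @ y)"
    using free_red_mid[of x "m @ word_inv m" y] by simp
  then show ?thesis by simp
qed

lemma free_red_cancel_mid_inv: "free_red (x @ word_inv m @ m @ y) = free_red (x @ y)"
  using free_red_cancel_mid[of x "word_inv m" y] by simp

lemma free_red_word_inv: "free_red (word_inv w) = word_inv (free_red w)"
proof -
  let ?r = "free_red w"
  have "free_red (word_inv w) = free_red (word_inv w @ (?r @ word_inv ?r))"
    using free_red_append_right[of "word_inv w" "?r @ word_inv ?r"] by simp
  also have "\<dots> = free_red (free_red (word_inv w @ ?r) @ word_inv ?r)"
    by (metis append_assoc free_red_append_left)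
  also have "free_red (word_inv w @ ?r) = []"
    by (metis free_red_append_right free_red_word_inv_left)
  finally show ?thesis by (simp add: reduced_word_inv)
qed

lemma free_grp_simps[simp]: "carrier (free_grp S) = {w. reduced_word w \<and> fst ` set w \<subseteq> S}"
  "monoid.mult (free_grp S) x y = free_red (x @ y)" "one (free_grp S) = []"
  by (simp_all add: free_grp_def)

lemma free_red_letters: "fst ` set w \<subseteq> S \<Longrightarrow> fst ` set (free_red w) \<subseteq> S"
  using free_red_set[of w] by blast

lemma group_free_grp: "group (free_grp S)"
proof (rule groupI)
  fix x y assume "x \<in> carrier (free_grp S)" "y \<in> carrier (free_grp S)"
  then show "x \<otimes>\<^bsub>free_grp S\<^esub> y \<in> carrier (free_grp S)"
  proof -
    have "fst ` set (x @ y) \<subseteq> S" using \<open>x \<in> _\<close> \<open>y \<in> _\<close> by auto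
    then show ?thesis by (simp add: free_red_letters)
  qed
next
  show "\<one>\<^bsub>free_grp S\<^esub> \<in> carrier (free_grp S)" by simp
next
  fix x y z
  show "x \<otimes>\<^bsub>free_grp S\<^esub> y \<otimes>\<^bsub>free_grp S\<^esub> z = x \<otimes>\<^bsub>free_grp S\<^esub> (y \<otimes>\<^bsub>free_grp S\<^esub> z)"
  proof -
    have "free_red (free_red (x @ y) @ z) = free_red (x @ y @ z)"
      by (metis append_assoc free_red_append_left)
    also have "\<dots> = free_red (x @ free_red (y @ z))"
      by (rule free_red_append_right)
    finally show ?thesis by simp
  qed
next
  fix x assume "x \<in> carrier (free_grp S)" then show "\<one>\<^bsub>free_grp S\<^esub> \<otimes>\<^bsub>free_grp S\<^esub> x = x" by simp
next
  fix x assume x: "x \<in> carrier (free_grp S)"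
  show "\<exists>y\<in>carrier (free_grp S). y \<otimes>\<^bsub>free_grp S\<^esub> x = \<one>\<^bsub>free_grp S\<^esub>"
    using x by (intro bexI[of _ "word_inv x"]) (auto simp: reduced_word_inv set_word_inv)
qed

lemma inv_free_grp: "x \<in> carrier (free_grp S) \<Longrightarrow> inv\<^bsub>free_grp S\<^esub> x = word_inv x"
  by (rule group.inv_equality[OF group_free_grp]) (auto simp: reduced_word_inv set_word_inv)

definition subst_word :: "('a letter \<Rightarrow> 'b letter list) \<Rightarrow> 'a letter list \<Rightarrow> 'b letter list" where
  "subst_word f w = free_red (concat (map f w))"

definition inv_compat :: "('a letter \<Rightarrow> 'b letter list) \<Rightarrow> bool" where
  "inv_compat f \<longleftrightarrow> (\<forall>l. f (inv_letter l) = word_inv (f l))"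

lemma subst_word_reduced[simp]: "reduced_word (subst_word f w)"
  by (simp add: subst_word_def)

lemma red_onto_concat_cancel:
  assumes "inv_compat f" "reduced_word z"
  shows "red_onto (concat (map f (cancel_cons l r))) z = red_onto (f l) (red_onto (concat (map f r)) z)"
proof (cases r)
  case Nil then show ?thesis by simp
next
  case (Cons y ys)
  show ?thesis
  proof (cases "y = inv_letter l")
    case True
    have "red_onto (f l) (red_onto (concat (map f r)) z) = red_onto (f l @ word_inv (f l)) (red_onto (concat (map f ys)) z)"
    proof -
      have "f (inv_letter l) = word_inv (f l)" using assms(1) unfolding inv_compat_def by blast
      then show ?thesis using Cons True by simp
    qed
    also have "\<dots> = red_onto (concat (map f ys)) z"
      by (rule red_onto_word_inv_right) (rule red_onto_reduced[OF assms(2)])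
    finally show ?thesis using Cons True by simp
  next
    case False then show ?thesis using Cons by simp
  qed
qed

lemma red_onto_concat_free_red:
  assumes "inv_compat f" "reduced_word z"
  shows "red_onto (concat (map f (free_red w))) z = red_onto (concat (map f w)) z"
proof (induction w)
  case Nil then show ?case by (simp add: free_red_def)
next
  case (Cons l w)
  have "free_red (l # w) = cancel_cons l (free_red w)" by (simp add: free_red_def)
  then show ?case using Cons red_onto_concat_cancel[OF assms, of l "free_red w"] by simp
qed

lemma subst_word_free_red[simp]: "inv_compat f \<Longrightarrow> subst_word f (free_red w) = subst_word f w"
  unfolding subst_word_def free_red_def using red_onto_concat_free_red[of f "[]" w] by (simp add: free_red_def)

lemma subst_word_append: "subst_word f (x @ y) = free_red (subst_word f x @ subst_word f y)"
  unfolding subst_word_def by (simp add: free_red_append[of "concat (map f x)"])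

lemma concat_map_word_inv: "inv_compat f \<Longrightarrow> concat (map f (word_inv x)) = word_inv (concat (map f x))"
proof (induction x)
  case (Cons l x)
  have "f (inv_letter l) = word_inv (f l)" using Cons.prems unfolding inv_compat_def by blast
  then show ?case using Cons by simp
qed simp

lemma subst_word_word_inv: "inv_compat f \<Longrightarrow> subst_word f (word_inv x) = word_inv (subst_word f x)"
  unfolding subst_word_def by (simp add: concat_map_word_inv free_red_word_inv)

lemma free_red_concat: "free_red (concat (map (\<lambda>l. free_red (F l)) w)) = free_red (concat (map F w))"
proof (induction w)
  case Nil then show ?case by simp
next
  case (Cons l w)
  have "free_red (concat (map (\<lambda>l. free_red (F l)) (l # w)))
      = free_red (free_red (F l) @ free_red (concat (map (\<lambda>l. free_red (F l)) w)))"
    using free_red_append_right by simp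
  also have "\<dots> = free_red (free_red (F l) @ free_red (concat (map F w)))" using Cons by simp
  also have "\<dots> = free_red (concat (map F (l # w)))" using free_red_append by (metis concat.simps(2) list.simps(9))
  finally show ?case .
qed

lemma subst_word_comp: "subst_word g (subst_word f w) = subst_word (\<lambda>l. subst_word g (f l)) w" if "inv_compat g"
proof -
  have "subst_word g (subst_word f w) = subst_word g (concat (map f w))"
    unfolding subst_word_def[of f] using that by (rule subst_word_free_red)
  also have "\<dots> = free_red (concat (map g (concat (map f w))))" by (simp add: subst_word_def)
  also have "concat (map g (concat (map f w))) = concat (map (\<lambda>l. concat (map g (f l))) w)"
    by (induction w) auto
  also have "free_red \<dots> = subst_word (\<lambda>l. subst_word g (f l)) w"
    unfolding subst_word_def[of "\<lambda>l. subst_word g (f l)"] unfolding subst_word_def[of g]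
    by (rule free_red_concat[of "\<lambda>l. concat (map g (f l))", symmetric])
  finally show ?thesis .
qed

lemma subst_word_id: "subst_word (\<lambda>l. [l]) w = free_red w"
  by (simp add: subst_word_def)

lemma subst_word_Nil[simp]: "subst_word f [] = []"
  by (simp add: subst_word_def free_red_def)

section \<open>Free factors are relatively torsion-free\<close>

definition letters_in :: "('a \<Rightarrow> bool) \<Rightarrow> 'a letter list \<Rightarrow> bool" where
  "letters_in T z \<longleftrightarrow> (\<forall>l\<in>set z. T (fst l))"

lemma letters_in_free_red: "letters_in T z \<Longrightarrow> letters_in T (free_red z)"
  using free_red_set[of z] unfolding letters_in_def by blast

lemma letters_in_append[simp]: "letters_in T (x @ y) \<longleftrightarrow> letters_in T x \<and> letters_in T y"
  by (auto simp: letters_in_def)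

lemma reduced_conj_decomp:
  "reduced_word c \<Longrightarrow> c \<noteq> [] \<Longrightarrow> \<exists>u v. c = u @ v @ word_inv u \<and> v \<noteq> [] \<and> hd v \<noteq> inv_letter (last v)
     \<and> hd (u @ v) = hd c \<and> last (v @ word_inv u) = last c"
proof (induction "length c" arbitrary: c rule: less_induct)
  case less
  show ?case
  proof (cases "hd c \<noteq> inv_letter (last c)")
    case True
    then show ?thesis using less.prems by (intro exI[of _ "[]"] exI[of _ c]) auto
  next
    case False
    then have hl: "hd c = inv_letter (last c)" by simp
    obtain x c' where c: "c = x # c'" using less.prems by (cases c) auto
    have "c' \<noteq> []" using hl c by auto
    then obtain m y where c': "c' = m @ [y]" by (metis append_butlast_last_id)
    have y: "y = inv_letter x" using hl c c' by simp
    have "m \<noteq> []" using less.prems(1) c c' y by auto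
    have rm: "reduced_word m" using less.prems(1) c c'
      by (metis append_Cons reduced_word_ConsD reduced_word_append)
    then obtain u' v where d: "m = u' @ v @ word_inv u'" "v \<noteq> []" "hd v \<noteq> inv_letter (last v)"
      using less.hyps[of m] \<open>m \<noteq> []\<close> c c' by auto
    show ?thesis
      using d c c' y by (intro exI[of _ "x # u'"] exI[of _ v]) auto
  qed
qed

lemma outer_letters_split:
  assumes "\<exists>l\<in>set y. \<not> T (fst l)"
  shows "\<exists>zL c zR. y = zL @ c @ zR \<and> letters_in T zL \<and> letters_in T zR \<and> c \<noteq> []
           \<and> \<not> T (fst (hd c)) \<and> \<not> T (fst (last c))"
proof -
  let ?P = "\<lambda>l. T (fst l)"
  define zL where "zL = takeWhile ?P y"
  define r where "r = dropWhile ?P y"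
  have y: "y = zL @ r" by (simp add: zL_def r_def)
  have "r \<noteq> []" using assms by (auto simp: r_def dropWhile_eq_Nil_conv)
  have hr: "\<not> ?P (hd r)" using \<open>r \<noteq> []\<close> unfolding r_def by (metis hd_dropWhile dropWhile_eq_Nil_conv)
  define zR where "zR = rev (takeWhile ?P (rev r))"
  define c where "c = rev (dropWhile ?P (rev r))"
  have r: "r = c @ zR" unfolding c_def zR_def by (metis rev_append takeWhile_dropWhile_id rev_rev_ident)
  have "c \<noteq> []"
  proof
    assume "c = []"
    then have "r = zR" using r by simp
    then have "\<forall>l\<in>set r. ?P l" unfolding zR_def by (metis set_rev set_takeWhileD)
    then show False using hr \<open>r \<noteq> []\<close> by simp
  qed
  have lc: "\<not> ?P (last c)" using \<open>c \<noteq> []\<close> unfolding c_def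
    by (metis hd_dropWhile last_rev rev_is_Nil_conv)
  have hc: "hd c = hd r" using r \<open>c \<noteq> []\<close> by simp
  have "letters_in T zL" unfolding zL_def letters_in_def by (meson set_takeWhileD)
  moreover have "letters_in T zR" unfolding zR_def letters_in_def by (metis set_rev set_takeWhileD)
  ultimately show ?thesis using y r \<open>c \<noteq> []\<close> lc hc hr by (intro exI[of _ zL] exI[of _ c] exI[of _ zR]) auto
qed

lemma neq_inv_letter_if_separated: "T (fst a) \<Longrightarrow> \<not> T (fst b) \<Longrightarrow> a \<noteq> inv_letter b \<and> b \<noteq> inv_letter a"
  by (metis fst_inv_letter)

definition word_alt_prod :: "'a letter list \<Rightarrow> 'a letter list list \<Rightarrow> 'a letter list" where
  "word_alt_prod g zs = foldr (\<lambda>z acc. free_red (g @ z @ acc)) zs []"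

lemma word_alt_prod_simps[simp]:
  "word_alt_prod g [] = []" "word_alt_prod g (z # zs) = free_red (g @ z @ word_alt_prod g zs)"
  by (simp_all add: word_alt_prod_def)

lemma reduced_word_alt_prod: "reduced_word (word_alt_prod g zs)"
  by (cases zs) simp_all

text \<open>The core \<open>u v u\<^sup>-\<^sup>1\<close> of \<open>y\<close> begins and ends with
  letters outside \<open>T\<close>, so the letters from \<open>T\<close> surrounding it cannot cancel into it; the
  only possible cancellation is \<open>v u\<^sup>-\<^sup>1 \<cdot> u v\<close> down to \<open>v v\<close>, which is reduced because \<open>v\<close> is
  cyclically reduced. Hence the prefix \<open>zL u v\<close> survives.\<close>

lemma free_factor_step_Nil:
  assumes ry: "reduced_word (zL @ (u @ v @ word_inv u) @ zR)"
    and v: "v \<noteq> []" and he: "\<not> T (fst (last (v @ word_inv u)))"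
    and TR: "letters_in T zR" and Tz: "letters_in T z"
  shows "\<exists>Q. free_red ((zL @ (u @ v @ word_inv u) @ zR) @ z) = zL @ u @ v @ Q"
proof -
  let ?core = "u @ v @ word_inv u"
  define z' where "z' = free_red (zR @ z)"
  have r1: "reduced_word (zL @ ?core)" using reduced_word_appendD1[of "zL @ ?core" zR] ry by simp
  have "letters_in T z'" unfolding z'_def using TR Tz by (intro letters_in_free_red) simp
  then have "reduced_word ((zL @ ?core) @ z')"
    using v he neq_inv_letter_if_separated[of T "hd z'" "last (v @ word_inv u)"]
    by (intro reduced_word_appendI[OF r1]) (auto simp: z'_def letters_in_def)
  moreover have "free_red ((zL @ ?core @ zR) @ z) = free_red ((zL @ ?core) @ z')"
    unfolding z'_def using free_red_append_right[of "zL @ ?core" "zR @ z"] by simp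
  ultimately show ?thesis by (intro exI[of _ "word_inv u @ z'"]) simp
qed

lemma free_factor_step_prefix:
  assumes ry: "reduced_word (zL @ (u @ v @ word_inv u) @ zR)"
    and v: "v \<noteq> []" and cyc: "hd v \<noteq> inv_letter (last v)"
    and hp: "\<not> T (fst (hd (u @ v)))" and he: "\<not> T (fst (last (v @ word_inv u)))"
    and TL: "letters_in T zL" and TR: "letters_in T zR" and Tz: "letters_in T z"
    and rR: "reduced_word (zL @ u @ v @ Q)"
  shows "\<exists>Q'. free_red ((zL @ (u @ v @ word_inv u) @ zR) @ z @ zL @ u @ v @ Q) = zL @ u @ v @ Q'"
proof -
  let ?core = "u @ v @ word_inv u"
  define z' where "z' = free_red (zR @ z @ zL)"
  have r1: "reduced_word (zL @ ?core)" using reduced_word_appendD1[of "zL @ ?core" zR] ry by simp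
  have ruvQ: "reduced_word (u @ v @ Q)" using rR reduced_word_appendD2 by blast
  have Tz': "letters_in T z'" unfolding z'_def using TR Tz TL by (intro letters_in_free_red) simp
  have eq: "free_red ((zL @ ?core @ zR) @ z @ zL @ u @ v @ Q) = free_red ((zL @ ?core) @ z' @ (u @ v @ Q))"
    unfolding z'_def using free_red_mid[of "zL @ ?core" "zR @ z @ zL" "u @ v @ Q"] by simp
  show ?thesis
  proof (cases "z' = []")
    case False
    have j1: "hd z' \<noteq> inv_letter (last (zL @ ?core))"
      using Tz' he v neq_inv_letter_if_separated[of T "hd z'" "last (v @ word_inv u)"] False
      by (simp add: letters_in_def)
    have "hd (u @ v @ Q) = hd (u @ v)" using v by (cases u) auto
    then have j2: "hd (u @ v @ Q) \<noteq> inv_letter (last z')"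
      using Tz' hp neq_inv_letter_if_separated[of T "last z'" "hd (u @ v)"] False
      by (simp add: letters_in_def)
    have "reduced_word (z' @ (u @ v @ Q))"
      by (rule reduced_word_appendI) (use j2 ruvQ in \<open>auto simp: z'_def\<close>)
    then have "reduced_word ((zL @ ?core) @ (z' @ (u @ v @ Q)))"
      using reduced_word_appendI[OF r1, of "z' @ (u @ v @ Q)"] j1 False by simp
    then show ?thesis using eq by (intro exI[of _ "word_inv u @ z' @ u @ v @ Q"]) simp
  next
    case True
    have rvQ: "reduced_word (v @ Q)" using ruvQ reduced_word_appendD2 by blast
    have "free_red ((zL @ ?core @ zR) @ z @ zL @ u @ v @ Q) = free_red ((zL @ u @ v) @ word_inv u @ u @ (v @ Q))"
      using eq True by simp
    also have "\<dots> = free_red ((zL @ u @ v) @ (v @ Q))" by (rule free_red_cancel_mid_inv)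
    also have "\<dots> = (zL @ u @ v) @ (v @ Q)"
    proof (rule free_red_id, rule reduced_word_appendI[OF _ rvQ])
      show "reduced_word (zL @ u @ v)" using r1 reduced_word_appendD1[of "zL @ u @ v" "word_inv u"] by simp
      show "hd (v @ Q) \<noteq> inv_letter (last (zL @ u @ v))" using v cyc by simp
    qed
    finally show ?thesis by (intro exI[of _ "v @ Q"]) simp
  qed
qed

lemma free_factor_alt_prod_prefix:
  assumes y: "y = zL @ (u @ v @ word_inv u) @ zR" and ry: "reduced_word y"
    and v: "v \<noteq> []" and cyc: "hd v \<noteq> inv_letter (last v)"
    and hp: "\<not> T (fst (hd (u @ v)))" and he: "\<not> T (fst (last (v @ word_inv u)))"
    and TL: "letters_in T zL" and TR: "letters_in T zR"
    and zs: "zs \<noteq> []" "\<forall>z\<in>set zs. letters_in T z"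
  shows "\<exists>Q. word_alt_prod y zs = zL @ u @ v @ Q"
  using zs
proof (induction zs)
  case Nil then show ?case by simp
next
  case (Cons z zs)
  then have Tz: "letters_in T z" by simp
  show ?case
  proof (cases "zs = []")
    case True
    then show ?thesis using free_factor_step_Nil[OF ry[unfolded y] v he TR Tz] y by simp
  next
    case False
    then obtain Q where Q: "word_alt_prod y zs = zL @ u @ v @ Q" using Cons by auto
    then have "reduced_word (zL @ u @ v @ Q)" using reduced_word_alt_prod by metis
    then show ?thesis
      using free_factor_step_prefix[OF ry[unfolded y] v cyc hp he TL TR Tz] Q y by simp
  qed
qed

lemma word_alt_prod_nonempty:
  assumes ry: "reduced_word y" and ny: "\<exists>l\<in>set y. \<not> T (fst l)"
    and zs: "zs \<noteq> []" "\<forall>z\<in>set zs. letters_in T z"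
  shows "word_alt_prod y zs \<noteq> []"
proof -
  obtain zL c zR where d: "y = zL @ c @ zR" "letters_in T zL" "letters_in T zR" "c \<noteq> []"
      "\<not> T (fst (hd c))" "\<not> T (fst (last c))"
    using outer_letters_split[OF ny] by blast
  have "reduced_word c" using ry d(1) reduced_word_appendD1 reduced_word_appendD2 by metis
  then obtain u v where cd: "c = u @ v @ word_inv u" "v \<noteq> []" "hd v \<noteq> inv_letter (last v)"
    "hd (u @ v) = hd c" "last (v @ word_inv u) = last c"
    using reduced_conj_decomp d(4) by blast
  have y: "y = zL @ (u @ v @ word_inv u) @ zR" using d(1) cd(1) by simp
  obtain Q where "word_alt_prod y zs = zL @ u @ v @ Q"
    using free_factor_alt_prod_prefix[OF y ry cd(2,3) _ _ d(2,3) zs] cd(4,5) d(5,6) by auto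
  then show ?thesis using cd(2) by simp
qed

section \<open>The kernel of the b-exponent sum\<close>

definition b_pow :: "int \<Rightarrow> nat letter list" where
  "b_pow n = (if 0 \<le> n then replicate (nat n) (1, False) else replicate (nat (- n)) (1, True))"

lemma b_pow_0[simp]: "b_pow 0 = []" by (simp add: b_pow_def)

lemma reduced_word_replicate: "inv_letter x \<noteq> x \<Longrightarrow> reduced_word (replicate k x)"
proof (induction k)
  case (Suc k) then show ?case by (cases k) auto
qed simp

lemma reduced_word_b_pow[simp]: "reduced_word (b_pow n)"
  unfolding b_pow_def by (auto intro: reduced_word_replicate)

lemma word_inv_replicate: "word_inv (replicate k x) = replicate k (inv_letter x)"
  by (simp add: word_inv_def)

lemma word_inv_b_pow[simp]: "word_inv (b_pow n) = b_pow (- n)"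
  by (auto simp: b_pow_def word_inv_replicate inv_letter_def)

lemma cancel_cons_b_b_pow: "cancel_cons (1, False) (b_pow n) = b_pow (n + 1)"
proof (cases "0 \<le> n")
  case True
  then show ?thesis by (cases "nat n") (auto simp: b_pow_def inv_letter_def nat_add_distrib)
next
  case False
  then obtain k where k: "nat (- n) = Suc k" by (metis gr0_implies_Suc zero_less_nat_eq neg_0_less_iff_less not_le)
  then have "nat (- (n + 1)) = k" by linarith
  then show ?thesis using False k by (auto simp: b_pow_def inv_letter_def)
qed

lemma cancel_cons_b_inv_b_pow: "cancel_cons (1, True) (b_pow n) = b_pow (n - 1)"
proof -
  show ?thesis
  proof (cases "n \<le> 0")
    case True
    then show ?thesis
    proof (cases "nat (- n)")
      case (Suc k)
      then have "nat (- (n - 1)) = Suc (Suc k)" by linarith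
      then show ?thesis using True Suc by (auto simp: b_pow_def inv_letter_def)
    qed (auto simp: b_pow_def inv_letter_def)
  next
    case False
    then obtain k where k: "nat n = Suc k" by (metis gr0_implies_Suc zero_less_nat_eq not_le)
    then have "nat (n - 1) = k" by linarith
    then show ?thesis using False k by (auto simp: b_pow_def inv_letter_def)
  qed
qed

lemma red_onto_b_pow: "red_onto (b_pow m) (b_pow n) = b_pow (m + n)"
proof (cases "0 \<le> m")
  case True
  have "red_onto (replicate k (1, False)) (b_pow n) = b_pow (int k + n)" for k
  proof (induction k)
    case (Suc k) then show ?case using cancel_cons_b_b_pow[of "n + int k"] by (simp del: foldr_replicate add: algebra_simps)
  qed simp
  moreover have "b_pow m = replicate (nat m) (1, False)" using True by (simp add: b_pow_def)
  ultimately show ?thesis using True by (metis add.commute int_nat_eq)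
next
  case False
  have "red_onto (replicate k (1, True)) (b_pow n) = b_pow (n - int k)" for k
  proof (induction k)
    case (Suc k) then show ?case using cancel_cons_b_inv_b_pow[of "n - int k"] by (simp del: foldr_replicate add: algebra_simps)
  qed simp
  moreover have "b_pow m = replicate (nat (- m)) (1, True)" using False by (simp add: b_pow_def)
  moreover have "n - int (nat (- m)) = m + n" using False by simp
  ultimately show ?thesis by metis
qed

lemma free_red_b_pow: "free_red (b_pow m @ b_pow n) = b_pow (m + n)"
  by (simp add: free_red_append_red_onto red_onto_b_pow)

lemma free_red_b_pow_mid: "free_red (b_pow m @ b_pow n @ x) = free_red (b_pow (m + n) @ x)"
  by (metis append_assoc free_red_append_left free_red_b_pow)

definition b_exp_letter :: "nat letter \<Rightarrow> int" where
  "b_exp_letter l = (if fst l = 0 then 0 else if snd l then -1 else 1)"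

definition b_exp :: "nat letter list \<Rightarrow> int" where
  "b_exp w = sum_list (map b_exp_letter w)"

lemma b_exp_simps[simp]: "b_exp [] = 0" "b_exp (l # w) = b_exp_letter l + b_exp w" "b_exp (x @ y) = b_exp x + b_exp y"
  by (simp_all add: b_exp_def)

lemma b_exp_letter_inv[simp]: "b_exp_letter (inv_letter l) = - b_exp_letter l"
  by (simp add: b_exp_letter_def inv_letter_def)

lemma b_exp_cancel_cons: "b_exp (cancel_cons l z) = b_exp_letter l + b_exp z"
  by (cases z) auto

lemma b_exp_free_red[simp]: "b_exp (free_red w) = b_exp w"
proof -
  have "b_exp (red_onto w z) = b_exp w + b_exp z" for z by (induction w) (auto simp: b_exp_cancel_cons)
  then show ?thesis unfolding free_red_def by simp
qed

lemma b_exp_b_pow[simp]: "b_exp (b_pow n) = n"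
  by (auto simp: b_pow_def b_exp_def b_exp_letter_def sum_list_replicate)

text \<open>Reidemeister-Schreier rewriting: by \<open>a_conj_schreier_rewrite\<close>,
  \<open>schreier_rewrite h w\<close> spells \<open>b\<^sup>-\<^sup>h w b\<^sup>h\<^sup>-\<^sup>e\<close>, where \<open>e = b_exp w\<close>, in the generators
  \<open>a\<^sub>i = b\<^sup>-\<^sup>i a b\<^sup>i\<close>; the letter \<open>(i, \<epsilon>)\<close> stands for \<open>a\<^sub>i\<close> or its inverse.\<close>

fun schreier_rewrite :: "int \<Rightarrow> nat letter list \<Rightarrow> int letter list" where
  "schreier_rewrite h [] = []"
| "schreier_rewrite h (l # w) = (if fst l = 0 then (h, snd l) # schreier_rewrite h w else schreier_rewrite (h - b_exp_letter l) w)"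

lemma schreier_rewrite_append: "schreier_rewrite h (x @ y) = schreier_rewrite h x @ schreier_rewrite (h - b_exp x) y"
  by (induction h x rule: schreier_rewrite.induct) (auto simp: b_exp_letter_def algebra_simps)

lemma schreier_rewrite_b_pow[simp]: "schreier_rewrite h (b_pow n) = []"
proof -
  have "schreier_rewrite h (replicate k (1, e)) = []" for k e by (induction k arbitrary: h) auto
  then show ?thesis by (simp add: b_pow_def)
qed

definition a_conj :: "int letter \<Rightarrow> nat letter list" where
  "a_conj l = b_pow (- fst l) @ [(0, snd l)] @ b_pow (fst l)"

lemma inv_compat_a_conj: "inv_compat a_conj"
  by (auto simp: inv_compat_def a_conj_def inv_letter_def)

lemma b_exp_a_conj[simp]: "b_exp (a_conj l) = 0"
  by (simp add: a_conj_def b_exp_letter_def)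

lemma schreier_rewrite_a_conj: "schreier_rewrite h (concat (map a_conj y)) = map (\<lambda>l. (h + fst l, snd l)) y"
proof (induction y)
  case Nil then show ?case by simp
next
  case (Cons l y)
  have "schreier_rewrite h (a_conj l) = [(h + fst l, snd l)]"
    by (simp add: a_conj_def schreier_rewrite_append)
  then show ?case using Cons by (simp add: schreier_rewrite_append)
qed

lemma schreier_rewrite_0_a_conj: "schreier_rewrite 0 (concat (map a_conj y)) = y"
  using schreier_rewrite_a_conj[of 0 y] by simp

lemma free_red_Cons_inv_letter: "free_red (x # inv_letter x # w) = free_red w"
  using free_red_cancel_mid[of "[]" "[x]" w] by simp

lemma schreier_rewrite_cancel: "free_red (schreier_rewrite h (l # r)) = free_red (schreier_rewrite h (cancel_cons l r))"
proof (cases r)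
  case Nil then show ?thesis by simp
next
  case (Cons y ys)
  show ?thesis
  proof (cases "y = inv_letter l")
    case True
    show ?thesis
    proof (cases "fst l = 0")
      case True
      then have "schreier_rewrite h (l # y # ys) = (h, snd l) # inv_letter (h, snd l) # schreier_rewrite h ys"
        using \<open>y = inv_letter l\<close> by (simp add: inv_letter_def)
      then show ?thesis using Cons \<open>y = inv_letter l\<close> free_red_Cons_inv_letter by simp
    next
      case False
      then show ?thesis using Cons True by (simp add: inv_letter_def b_exp_letter_def)
    qed
  next
    case False then show ?thesis using Cons by simp
  qed
qed

lemma schreier_rewrite_free_red: "free_red (schreier_rewrite h (free_red w)) = free_red (schreier_rewrite h w)"
proof (induction w arbitrary: h)
  case Nil then show ?case by (simp add: free_red_def)
next
  case (Cons l w)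
  have split: "schreier_rewrite h (l # x) = schreier_rewrite h [l] @ schreier_rewrite (h - b_exp_letter l) x" for x
    using schreier_rewrite_append[of h "[l]" x] by simp
  have "free_red (schreier_rewrite h (l # w)) = free_red (schreier_rewrite h [l] @ free_red (schreier_rewrite (h - b_exp_letter l) w))"
    using split free_red_append_right by metis
  also have "\<dots> = free_red (schreier_rewrite h [l] @ free_red (schreier_rewrite (h - b_exp_letter l) (free_red w)))"
    using Cons by simp
  also have "\<dots> = free_red (schreier_rewrite h (l # free_red w))"
    using split free_red_append_right by metis
  also have "\<dots> = free_red (schreier_rewrite h (cancel_cons l (free_red w)))" by (rule schreier_rewrite_cancel)
  also have "cancel_cons l (free_red w) = free_red (l # w)" by (simp add: free_red_def)
  finally show ?case by simp
qed

lemma a_conj_schreier_rewrite: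
  assumes "fst ` set g \<subseteq> {0, 1}"
  shows "free_red (concat (map a_conj (schreier_rewrite h g))) = free_red (b_pow (- h) @ g @ b_pow (h - b_exp g))"
  using assms
proof (induction g arbitrary: h)
  case Nil
  then show ?case using free_red_b_pow[of "- h" h] by simp
next
  case (Cons l g)
  then have IH: "free_red (concat (map a_conj (schreier_rewrite h' g))) = free_red (b_pow (- h') @ g @ b_pow (h' - b_exp g))" for h'
    by simp
  have l: "fst l = 0 \<or> fst l = 1" using Cons.prems by auto
  show ?case
  proof (cases "fst l = 0")
    case True
    have "free_red (concat (map a_conj (schreier_rewrite h (l # g))))
        = free_red (a_conj (h, snd l) @ concat (map a_conj (schreier_rewrite h g)))"
      using True by simp
    also have "\<dots> = free_red (a_conj (h, snd l) @ free_red (b_pow (- h) @ g @ b_pow (h - b_exp g)))"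
      using IH free_red_append_right by metis
    also have "\<dots> = free_red (a_conj (h, snd l) @ (b_pow (- h) @ g @ b_pow (h - b_exp g)))"
      by (rule free_red_append_right[symmetric])
    also have "\<dots> = free_red ((b_pow (- h) @ [(0, snd l)]) @ b_pow h @ word_inv (b_pow h) @ (g @ b_pow (h - b_exp g)))"
      by (simp add: a_conj_def)
    also have "\<dots> = free_red ((b_pow (- h) @ [(0, snd l)]) @ (g @ b_pow (h - b_exp g)))"
      by (rule free_red_cancel_mid)
    finally show ?thesis using True by (cases l) (simp add: b_exp_letter_def)
  next
    case False
    then have l1: "fst l = 1" using l by simp
    have lb: "[l] = b_pow (b_exp_letter l)" using l1 by (cases l) (auto simp: b_exp_letter_def b_pow_def)
    have "free_red (concat (map a_conj (schreier_rewrite h (l # g))))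
        = free_red (b_pow (- (h - b_exp_letter l)) @ g @ b_pow (h - b_exp_letter l - b_exp g))"
      using False IH by simp
    also have "\<dots> = free_red (b_pow (- h) @ b_pow (b_exp_letter l) @ g @ b_pow (h - b_exp (l # g)))"
      by (simp add: free_red_b_pow_mid algebra_simps)
    finally show ?thesis using lb by (metis append_Cons append_Nil)
  qed
qed

definition nielsen :: "int letter \<Rightarrow> int letter list" where
  "nielsen l = (if fst l = 2 then (if snd l then [(1, True), (2, True)] else [(2, False), (1, False)]) else [l])"

definition nielsen_inv :: "int letter \<Rightarrow> int letter list" where
  "nielsen_inv l = (if fst l = 2 then (if snd l then [(1, False), (2, True)] else [(2, False), (1, True)]) else [l])"

lemma inv_compat_nielsen: "inv_compat nielsen"
  by (auto simp: inv_compat_def nielsen_def inv_letter_def)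

lemma inv_compat_nielsen_inv: "inv_compat nielsen_inv"
  by (auto simp: inv_compat_def nielsen_inv_def inv_letter_def)

lemma nielsen_nielsen_inv: "subst_word nielsen (nielsen_inv l) = [l]"
  by (cases l) (auto simp: nielsen_def nielsen_inv_def subst_word_def free_red_def inv_letter_def)

lemma nielsen_inv_nielsen: "subst_word nielsen_inv (nielsen l) = [l]"
  by (cases l) (auto simp: nielsen_def nielsen_inv_def subst_word_def free_red_def inv_letter_def)

lemma subst_word_nielsen_nielsen_inv: "subst_word nielsen (subst_word nielsen_inv q) = free_red q"
  using subst_word_comp[OF inv_compat_nielsen, of nielsen_inv q] nielsen_nielsen_inv subst_word_id by simp

lemma subst_word_nielsen_inv_nielsen: "subst_word nielsen_inv (subst_word nielsen q) = free_red q"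
  using subst_word_comp[OF inv_compat_nielsen_inv, of nielsen q] nielsen_inv_nielsen subst_word_id by simp

text \<open>\<open>basis_word y\<close> reads \<open>y\<close> in the basis \<open>y\<^sub>i\<close> of the kernel, where \<open>y\<^sub>i = a\<^sub>i\<close>
  except \<open>y\<^sub>2 = a\<^sub>2 a\<^sub>1\<^sup>-\<^sup>1\<close>.\<close>

definition basis_word :: "int letter list \<Rightarrow> nat letter list" where
  "basis_word y = subst_word a_conj (subst_word nielsen_inv y)"

definition basis_coords :: "nat letter list \<Rightarrow> int letter list" where
  "basis_coords g = subst_word nielsen (schreier_rewrite 0 g)"

lemma basis_word_basis_coords:
  assumes "reduced_word g" "fst ` set g \<subseteq> {0, 1}" "b_exp g = 0"
  shows "basis_word (basis_coords g) = g"
proof -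
  have "basis_word (basis_coords g) = subst_word a_conj (free_red (schreier_rewrite 0 g))"
    unfolding basis_word_def basis_coords_def by (simp add: subst_word_nielsen_inv_nielsen)
  also have "\<dots> = subst_word a_conj (schreier_rewrite 0 g)" using inv_compat_a_conj by simp
  also have "\<dots> = free_red (b_pow 0 @ g @ b_pow 0)"
    unfolding subst_word_def using a_conj_schreier_rewrite[OF assms(2), of 0] assms(3) by simp
  finally show ?thesis using assms(1) by simp
qed

lemma subst_word_a_conj_inj: assumes "reduced_word r" "subst_word a_conj r = []" shows "r = []"
proof -
  have "free_red (schreier_rewrite 0 (free_red (concat (map a_conj r)))) = free_red (schreier_rewrite 0 [])"
    using assms(2) unfolding subst_word_def by simp
  then have "free_red (schreier_rewrite 0 (concat (map a_conj r))) = []"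
    using schreier_rewrite_free_red[of 0 "concat (map a_conj r)"] by (simp add: free_red_def[of "[]"])
  then show ?thesis using schreier_rewrite_0_a_conj[of r] assms(1) by simp
qed

lemma basis_word_inj: "basis_word q = [] \<Longrightarrow> free_red q = []"
  unfolding basis_word_def using subst_word_a_conj_inj[of "subst_word nielsen_inv q"] subst_word_nielsen_nielsen_inv[of q] by simp

lemma basis_word_append: "basis_word (x @ y) = free_red (basis_word x @ basis_word y)"
proof -
  have "subst_word nielsen_inv (x @ y) = free_red (subst_word nielsen_inv x @ subst_word nielsen_inv y)"
    by (rule subst_word_append)
  then show ?thesis unfolding basis_word_def using inv_compat_a_conj by (simp add: subst_word_append)
qed

lemma basis_word_word_inv: "basis_word (word_inv x) = word_inv (basis_word x)"
  unfolding basis_word_def using inv_compat_a_conj inv_compat_nielsen_inv by (simp add: subst_word_word_inv)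

lemma basis_word_reduced[simp]: "reduced_word (basis_word x)"
  by (simp add: basis_word_def)

lemma b_exp_basis_word[simp]: "b_exp (basis_word x) = 0"
proof -
  have "b_exp (concat (map a_conj y)) = 0" for y by (induction y) auto
  then show ?thesis by (simp add: basis_word_def subst_word_def)
qed

lemma letters_b_pow: "fst ` set (b_pow n) \<subseteq> {0, 1}"
  by (auto simp: b_pow_def)

lemma letters_a_conj: "fst ` set (a_conj m) \<subseteq> {0, 1}"
  using letters_b_pow[of "fst m"] letters_b_pow[of "- fst m"] unfolding a_conj_def
  by (simp only: set_append image_Un) auto

lemma letters_basis_word: "fst ` set (basis_word x) \<subseteq> {0, 1}"
proof -
  have "fst ` set (concat (map a_conj y)) \<subseteq> {0, 1}" for y
  proof (induction y)
    case (Cons m y)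
    have "fst ` set (concat (map a_conj (m # y))) = fst ` set (a_conj m) \<union> fst ` set (concat (map a_conj y))"
      by (simp add: image_Un)
    then show ?case using Cons letters_a_conj[of m] by (simp only:) (rule Un_least)
  qed simp
  moreover have "fst ` set (free_red W) \<subseteq> fst ` set W" for W :: "nat letter list"
    by (rule image_mono) (rule free_red_set)
  ultimately show ?thesis unfolding basis_word_def subst_word_def by (meson order_trans)
qed

section \<open>The subgroup C\<close>

text \<open>\<open>factor_subgroup\<close> is the free factor \<open>\<langle>y\<^sub>0, y\<^sub>2\<rangle>\<close> of the kernel. It equals \<open>C\<close>
  because \<open>a = y\<^sub>0\<close> and \<open>w_C = y\<^sub>2 y\<^sub>0\<close>.\<close>

definition factor_index :: "int \<Rightarrow> bool" where "factor_index i \<longleftrightarrow> i = 0 \<or> i = 2"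

definition factor_subgroup :: "nat letter list set" where
  "factor_subgroup = basis_word ` {z. reduced_word z \<and> letters_in factor_index z}"

lemma basis_word_free_red[simp]: "basis_word (free_red x) = basis_word x"
  unfolding basis_word_def using inv_compat_nielsen_inv by simp

lemma basis_word_Nil[simp]: "basis_word [] = []"
  by (simp add: basis_word_def)

abbreviation F2 :: "nat letter list monoid" where "F2 \<equiv> free_grp {0, 1}"

lemma basis_word_carrier: "basis_word z \<in> carrier F2"
  unfolding free_grp_simps mem_Collect_eq using basis_word_reduced[of z] letters_basis_word[of z] by (rule conjI)

lemma factor_subgroup_carrier: "factor_subgroup \<subseteq> carrier F2"
  unfolding factor_subgroup_def using basis_word_carrier by blast

lemma letters_in_word_inv: "letters_in T (word_inv z) = letters_in T z"
  by (auto simp: letters_in_def set_word_inv)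

lemma factor_subgroupI: "reduced_word z \<Longrightarrow> letters_in factor_index z \<Longrightarrow> basis_word z \<in> factor_subgroup"
  unfolding factor_subgroup_def by blast

lemma factor_subgroupE:
  "h \<in> factor_subgroup \<Longrightarrow>
    (\<And>z. h = basis_word z \<Longrightarrow> reduced_word z \<Longrightarrow> letters_in factor_index z \<Longrightarrow> P) \<Longrightarrow> P"
  unfolding factor_subgroup_def by blast

lemma factor_subgroup_inv: "h \<in> factor_subgroup \<Longrightarrow> inv\<^bsub>F2\<^esub> h \<in> factor_subgroup"
proof -
  assume h: "h \<in> factor_subgroup"
  then have "inv\<^bsub>F2\<^esub> h = word_inv h" using factor_subgroup_carrier inv_free_grp by blast
  moreover obtain z where "h = basis_word z" "reduced_word z" "letters_in factor_index z" using h by (rule factor_subgroupE)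
  ultimately show ?thesis using basis_word_word_inv[of z] factor_subgroupI[of "word_inv z"] by (simp add: reduced_word_inv letters_in_word_inv)
qed

lemma factor_subgroup_mult:
  "h1 \<in> factor_subgroup \<Longrightarrow> h2 \<in> factor_subgroup \<Longrightarrow> h1 \<otimes>\<^bsub>F2\<^esub> h2 \<in> factor_subgroup"
proof -
  assume "h1 \<in> factor_subgroup" "h2 \<in> factor_subgroup"
  then obtain z1 z2 where "h1 = basis_word z1" "letters_in factor_index z1" "h2 = basis_word z2" "letters_in factor_index z2"
    by (metis factor_subgroupE)
  then show ?thesis using basis_word_append[of z1 z2] factor_subgroupI[of "free_red (z1 @ z2)"]
    by (simp add: letters_in_free_red)
qed

lemma generate_sub_factor_subgroup: "H \<subseteq> factor_subgroup \<Longrightarrow> generate F2 H \<subseteq> factor_subgroup"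
proof
  fix x assume H: "H \<subseteq> factor_subgroup" and x: "x \<in> generate F2 H"
  from x show "x \<in> factor_subgroup"
  proof (induction rule: generate.induct)
    case one then show ?case using factor_subgroupI[of "[]"] by (simp add: letters_in_def)
  next
    case (incl h) then show ?case using H by blast
  next
    case (inv h) then show ?case using H factor_subgroup_inv by blast
  next
    case (eng h1 h2) then show ?case using factor_subgroup_mult by blast
  qed
qed

lemma factor_subgroup_sub_generate:
  assumes "basis_word [(0, False)] \<in> generate F2 H" "basis_word [(0, True)] \<in> generate F2 H"
    "basis_word [(2, False)] \<in> generate F2 H" "basis_word [(2, True)] \<in> generate F2 H"
  shows "factor_subgroup \<subseteq> generate F2 H"
proof
  fix h assume "h \<in> factor_subgroup"
  then obtain z where hz: "h = basis_word z" "reduced_word z" "letters_in factor_index z" by (rule factor_subgroupE)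
  have "reduced_word z \<Longrightarrow> letters_in factor_index z \<Longrightarrow> basis_word z \<in> generate F2 H"
  proof (induction z)
    case Nil then show ?case using generate.one[of F2 H] by simp
  next
    case (Cons l z)
    have "basis_word z \<in> generate F2 H" using Cons by (simp add: letters_in_def reduced_word_ConsD)
    moreover have "basis_word [l] \<in> generate F2 H"
    proof -
      have "fst l = 0 \<or> fst l = 2" using Cons.prems(2) by (simp add: letters_in_def factor_index_def)
      moreover obtain i e where l: "l = (i, e)" by (cases l)
      ultimately have "l = (0, False) \<or> l = (0, True) \<or> l = (2, False) \<or> l = (2, True)"
        by (cases e) auto
      then show ?thesis using assms by blast
    qed
    moreover have "basis_word (l # z) = basis_word [l] \<otimes>\<^bsub>F2\<^esub> basis_word z"
      using basis_word_append[of "[l]" z] by simp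
    ultimately show ?case by (simp only:) (rule generate.eng)
  qed
  then show "h \<in> generate F2 H" using hz by simp
qed

definition w_C :: "nat letter list" where
  "w_C = [(1, True), (1, True), (0, False), (1, False), (0, True), (1, False), (0, False)]"

lemmas basis_word_eval = basis_word_def subst_word_def nielsen_inv_def a_conj_def free_red_def
  b_pow_def inv_letter_def numeral_2_eq_2

lemma basis_word_0F: "basis_word [(0, False)] = [(0, False)]"
  by (simp add: basis_word_def subst_word_def nielsen_inv_def a_conj_def free_red_def)

lemma basis_word_0T: "basis_word [(0, True)] = [(0, True)]"
  by (simp add: basis_word_def subst_word_def nielsen_inv_def a_conj_def free_red_def)

lemma basis_word_2F: "basis_word [(2, False)] = [(1, True), (1, True), (0, False), (1, False), (0, True), (1, False)]"
  by (simp add: basis_word_eval del: foldr_replicate)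

lemma basis_word_2T: "basis_word [(2, True)] = [(1, True), (0, False), (1, True), (0, True), (1, False), (1, False)]"
  by (simp add: basis_word_eval del: foldr_replicate)

lemma basis_word_w_C: "basis_word [(2, False), (0, False)] = w_C"
  by (simp add: w_C_def basis_word_eval del: foldr_replicate)

lemma w_C_eq_conjg: "conjg F2 [(0, False)] ([(1, False)] \<otimes>\<^bsub>F2\<^esub> [(1, False)]) \<otimes>\<^bsub>F2\<^esub>
     inv\<^bsub>F2\<^esub> (conjg F2 [(0, False)] [(1, False)]) \<otimes>\<^bsub>F2\<^esub> [(0, False)] = w_C"
  by (simp add: conjg_def inv_free_grp free_red_def inv_letter_def w_C_def)

lemma inv_a_F2: "inv\<^bsub>F2\<^esub> [(0, False)] = [(0, True)]"
  by (simp add: inv_free_grp inv_letter_def)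

lemma w_C_carrier: "w_C \<in> carrier F2"
  by (simp add: w_C_def inv_letter_def)

lemma inv_w_C: "inv\<^bsub>F2\<^esub> w_C = [(0, True), (1, True), (0, False), (1, True), (0, True), (1, False), (1, False)]"
  unfolding inv_free_grp[OF w_C_carrier] by (simp add: w_C_def inv_letter_def)

lemma basis_word_2F_gens: "basis_word [(2, False)] = w_C \<otimes>\<^bsub>F2\<^esub> [(0, True)]"
  by (simp add: basis_word_2F w_C_def free_red_def inv_letter_def)

lemma basis_word_2T_gens: "basis_word [(2, True)] = [(0, False)] \<otimes>\<^bsub>F2\<^esub> inv\<^bsub>F2\<^esub> w_C"
  by (simp only: inv_w_C basis_word_2T) (simp add: free_red_def inv_letter_def)

lemma a_in_factor_subgroup: "[(0, False)] \<in> factor_subgroup"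
  using factor_subgroupI[of "[(0, False)]"] basis_word_0F by (simp add: letters_in_def factor_index_def)

lemma w_C_in_factor_subgroup: "w_C \<in> factor_subgroup"
  using factor_subgroupI[of "[(2, False), (0, False)]"] basis_word_w_C by (simp add: letters_in_def factor_index_def inv_letter_def)

lemma generate_a_w_C: "generate F2 {[(0, False)], w_C} = factor_subgroup"
proof
  let ?H = "{[(0, False)], w_C}"
  show "generate F2 ?H \<subseteq> factor_subgroup"
    using a_in_factor_subgroup w_C_in_factor_subgroup by (intro generate_sub_factor_subgroup) auto
  have ia: "[(0, False)] \<in> generate F2 ?H" by (rule generate.incl) simp
  have iw: "w_C \<in> generate F2 ?H" by (rule generate.incl) simp
  have iA: "[(0, True)] \<in> generate F2 ?H"
    using generate.inv[of "[(0, False)]" ?H F2] inv_a_F2 by simp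
  have iW: "inv\<^bsub>F2\<^esub> w_C \<in> generate F2 ?H" by (rule generate.inv) simp
  show "factor_subgroup \<subseteq> generate F2 ?H"
  proof (rule factor_subgroup_sub_generate)
    show "basis_word [(0, False)] \<in> generate F2 ?H" using basis_word_0F ia by simp
    show "basis_word [(0, True)] \<in> generate F2 ?H" using basis_word_0T iA by simp
    show "basis_word [(2, False)] \<in> generate F2 ?H"
      unfolding basis_word_2F_gens using iw iA by (rule generate.eng)
    show "basis_word [(2, True)] \<in> generate F2 ?H"
      unfolding basis_word_2T_gens using ia iW by (rule generate.eng)
  qed
qed

lemma (in group) generate_insert_inv:
  assumes "x \<in> carrier G" "H \<subseteq> carrier G"
  shows "generate G (insert (inv x) H) = generate G (insert x H)"
proof -
  have "generate G (insert (inv y) H) \<subseteq> generate G (insert y H)" if "y \<in> carrier G" for y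
    using that assms(2)
    by (intro generate_subgroup_incl generate_is_subgroup) (auto intro: generate.incl generate.inv)
  from this[of x] this[of "inv x"] show ?thesis using assms(1) by auto
qed

lemma free_grp_alt_prod:
  "foldr (\<lambda>h acc. g \<otimes>\<^bsub>free_grp S\<^esub> h \<otimes>\<^bsub>free_grp S\<^esub> acc) hs \<one>\<^bsub>free_grp S\<^esub> = word_alt_prod g hs"
  by (induction hs) (simp_all add: free_red_append_left[of "g @ h" for h, symmetric])

lemma b_exp_word_alt_prod:
  "\<forall>h\<in>set hs. b_exp h = 0 \<Longrightarrow> b_exp (word_alt_prod g hs) = int (length hs) * b_exp g"
  by (induction hs) (simp_all add: algebra_simps)

lemma basis_word_alt_prod:
  "word_alt_prod (basis_word y) (map basis_word zs) = basis_word (word_alt_prod y zs)"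
proof (induction zs)
  case (Cons z zs)
  let ?R = "word_alt_prod y zs"
  have "basis_word (free_red (y @ z @ ?R)) = free_red (basis_word y @ free_red (basis_word z @ basis_word ?R))"
    by (simp add: basis_word_append)
  also have "\<dots> = free_red (basis_word y @ basis_word z @ basis_word ?R)"
    by (rule free_red_append_right[symmetric])
  finally show ?case using Cons by simp
qed simp

lemma subset_factor_subgroup_imp_map:
  "set hs \<subseteq> factor_subgroup \<Longrightarrow> \<exists>zs. hs = map basis_word zs \<and> (\<forall>z\<in>set zs. letters_in factor_index z)"
proof (induction hs)
  case (Cons h hs)
  then obtain zs where "hs = map basis_word zs" "\<forall>z\<in>set zs. letters_in factor_index z" by auto
  moreover obtain z where "h = basis_word z" "letters_in factor_index z"
    using Cons.prems by (auto elim: factor_subgroupE)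
  ultimately show ?case by (intro exI[of _ "z # zs"]) auto
qed simp

lemma rel_torsion_free_factor_subgroup: "rel_torsion_free F2 factor_subgroup"
  unfolding rel_torsion_free_def free_grp_alt_prod
proof (intro ballI allI impI)
  fix g hs assume g: "g \<in> carrier F2 - factor_subgroup" and hs: "hs \<noteq> [] \<and> set hs \<subseteq> factor_subgroup"
  show "word_alt_prod g hs \<noteq> \<one>\<^bsub>F2\<^esub>"
  proof (cases "b_exp g = 0")
    case False
    have "\<forall>h\<in>set hs. b_exp h = 0" using hs by (metis b_exp_basis_word factor_subgroupE subsetD)
    then show ?thesis using b_exp_word_alt_prod[of hs g] False hs by auto
  next
    case True
    define y where "y = basis_coords g"
    have gy: "basis_word y = g" using basis_word_basis_coords g True by (auto simp: y_def)
    have ry: "reduced_word y" by (simp add: y_def basis_coords_def)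
    have "\<exists>l\<in>set y. \<not> factor_index (fst l)"
      using g gy factor_subgroupI[OF ry] by (auto simp: letters_in_def)
    moreover obtain zs where zs: "hs = map basis_word zs" "\<forall>z\<in>set zs. letters_in factor_index z"
      using subset_factor_subgroup_imp_map hs by blast
    ultimately have "word_alt_prod y zs \<noteq> []" using word_alt_prod_nonempty[OF ry] hs by auto
    then have "basis_word (word_alt_prod y zs) \<noteq> []"
      using basis_word_inj reduced_word_alt_prod free_red_id by metis
    then show ?thesis using basis_word_alt_prod[of y zs] gy zs(1) by simp
  qed
qed

theorem mainTheorem19:
  fixes A B :: "(nat letter list) monoid" and a b c d :: "nat letter list"
  assumes "A = free_grp {0, 1}" and "a = gen_word 0" and "b = gen_word 1"
    and "B = free_grp {0, 1}" and "c = gen_word 0" and "d = gen_word 1"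
  shows "rel_torsion_free A (generate A {a, conjg A a (b \<otimes>\<^bsub>A\<^esub> b) \<otimes>\<^bsub>A\<^esub> inv\<^bsub>A\<^esub> (conjg A a b) \<otimes>\<^bsub>A\<^esub> a})
       \<and> rel_torsion_free B (generate B {inv\<^bsub>B\<^esub> c, conjg B c (d \<otimes>\<^bsub>B\<^esub> d) \<otimes>\<^bsub>B\<^esub> inv\<^bsub>B\<^esub> (conjg B c d) \<otimes>\<^bsub>B\<^esub> c})"
proof -
  have gens: "a = [(0, False)]" "b = [(1, False)]" "c = [(0, False)]" "d = [(1, False)]"
    using assms by (simp_all add: gen_word_def)
  have "generate F2 {inv\<^bsub>F2\<^esub> [(0, False)], w_C} = generate F2 {[(0, False)], w_C}"
    using w_C_carrier by (intro group.generate_insert_inv[OF group_free_grp]) simp_all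
  then show ?thesis
    unfolding assms(1,4) gens w_C_eq_conjg
    using generate_a_w_C rel_torsion_free_factor_subgroup by simp
qed

end
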